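(* The function $t\mapsto\dot H(t)/\dot I(t)$ is decreasing on $(0,\infty)$.
   Context: $\dot H(t)=\frac{1}{\ln2}\big(te^{-t}-(1-e^{-t})\ln(1-e^{-t})\big)$ and $\dot I(t)=\frac{t^2}{e^t-1}$ for $t>0$ (the entropy in bits and the normalized Fisher information $\lambda^2 I$ of the indicator that a $\mathrm{Poisson}(t)$ variable, $t=p\lambda$, is nonzero). *)

theory Defs
  imports Complex_Main
begin

text \<open>Entropy (in bits) of the indicator that a Poisson(t) variable is nonzero.\<close>
definition Hdot :: "real \<Rightarrow> real" where
  "Hdot t = (1 / ln 2) * (t * exp (- t) - (1 - exp (- t)) * ln (1 - exp (- t)))"

definition Idot :: "real \<Rightarrow> real" where
  "Idot t = t\<^sup>2 / (exp t - 1)"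

end

theory Submission
  imports Defs
begin

text \<open>With \<open>v = 1 - exp (-t)\<close> and \<open>p = v / t\<close> one has
  \<open>Hdot t / Idot t = (p + p\<^sup>2 * q v) / ln 2\<close>, where \<open>q v = - ln v / (1 - v)\<close>.
  Both \<open>p\<close> (as a function of \<open>t\<close>) and \<open>q\<close> (as a function of \<open>v\<close>) are positive and strictly
  decreasing, while \<open>v\<close> increases with \<open>t\<close>; the sign of each derivative reduces to the
  strict inequality \<open>ln y < y - 1\<close> for \<open>y \<noteq> 1\<close>.\<close>

lemma one_minus_exp_neg_div_strict_antimono:
  fixes s t :: real
  assumes "0 < s" "s < t"
  shows "(1 - exp (-t)) / t < (1 - exp (-s)) / s"
proof -
  have "\<exists>y. DERIV (\<lambda>x. (1 - exp (-x)) / x) x :> y \<and> y < 0" if "s \<le> x" "x \<le> t" for x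
  proof -
    have x: "0 < x" using that assms by linarith
    have "1 + x < exp x"
      using ln_add_one_self_less_self[OF x] x by (metis add_pos_pos exp_less_cancel_iff exp_ln zero_less_one)
    then have "exp (-x) * (1 + x) < 1"
      by (simp add: exp_minus field_simps)
    then have "(exp (-x) * x - (1 - exp (-x))) / x\<^sup>2 < 0"
      using x by (simp add: divide_neg_pos algebra_simps)
    moreover have "DERIV (\<lambda>x. (1 - exp (-x)) / x) x :> (exp (-x) * x - (1 - exp (-x))) / x\<^sup>2"
      using x by (auto intro!: derivative_eq_intros simp: power2_eq_square)
    ultimately show ?thesis by blast
  qed
  from DERIV_neg_imp_decreasing[OF assms(2) this] show ?thesis by simp
qed

lemma neg_ln_div_one_minus_strict_antimono:
  fixes a b :: real
  assumes "0 < a" "a < b" "b < 1"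
  shows "- ln b / (1 - b) < - ln a / (1 - a)"
proof -
  have "\<exists>y. DERIV (\<lambda>v. - ln v / (1 - v)) x :> y \<and> y < 0" if "a \<le> x" "x \<le> b" for x
  proof -
    have x: "0 < x" "x < 1" using that assms by linarith+
    have "ln (1 + (1 / x - 1)) < 1 / x - 1"
      using x by (intro ln_add_one_self_less_self) (simp add: field_simps)
    then have "- ln x < 1 / x - 1"
      using x by (simp add: ln_div)
    then have "(- (1 / x) * (1 - x) - ln x) / (1 - x)\<^sup>2 < 0"
      using x by (simp add: divide_neg_pos field_simps)
    moreover have "DERIV (\<lambda>v. - ln v / (1 - v)) x :> (- (1 / x) * (1 - x) - ln x) / (1 - x)\<^sup>2"
      using x by (auto intro!: derivative_eq_intros simp: power2_eq_square divide_simps)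
    ultimately show ?thesis by blast
  qed
  from DERIV_neg_imp_decreasing[OF assms(2) this] show ?thesis by simp
qed

lemma Hdot_div_Idot_eq:
  fixes t :: real
  assumes "0 < t"
  defines "v \<equiv> 1 - exp (-t)"
  shows "Hdot t / Idot t = (v / t + (v / t)\<^sup>2 * (- ln v / (1 - v))) / ln 2"
proof -
  have exp_gt: "1 < exp t" using assms by simp
  have exp_minus_one: "exp t - 1 = v / (1 - v)"
    unfolding v_def using exp_gt by (simp add: exp_minus field_simps)
  have "Hdot t / Idot t = (t * (1 - v) - v * ln v) * (exp t - 1) / t\<^sup>2 / ln 2"
    unfolding Hdot_def Idot_def v_def using assms exp_gt by (simp add: field_simps)
  also have "\<dots> = (v / t + (v / t)\<^sup>2 * (- ln v / (1 - v))) / ln 2"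
    unfolding exp_minus_one v_def using assms by (simp add: field_simps power2_eq_square)
  finally show ?thesis .
qed

lemma add_sq_mult_strict_mono:
  fixes p p' q q' :: real
  assumes "0 < p'" "p' < p" "0 \<le> q'" "q' \<le> q"
  shows "p' + p'\<^sup>2 * q' < p + p\<^sup>2 * q"
proof -
  have "p'\<^sup>2 \<le> p\<^sup>2" using assms by (simp add: power_mono)
  then have "p'\<^sup>2 * q' \<le> p\<^sup>2 * q" using assms by (intro mult_mono) auto
  then show ?thesis using assms(2) by linarith
qed

theorem mainTheorem10:
  shows "\<forall>s t. 0 < s \<longrightarrow> s < t \<longrightarrow> Hdot t / Idot t < Hdot s / Idot s"
proof (intro allI impI)
  fix s t :: real
  assume s: "0 < s" and st: "s < t"
  define vs where "vs = 1 - exp (-s)"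
  define vt where "vt = 1 - exp (-t)"
  have v: "0 < vs" "vs < vt" "vt < 1"
    unfolding vs_def vt_def using s st by auto
  have "vt / t < vs / s"
    unfolding vs_def vt_def using one_minus_exp_neg_div_strict_antimono[OF s st] .
  moreover have "- ln vt / (1 - vt) < - ln vs / (1 - vs)"
    using neg_ln_div_one_minus_strict_antimono[OF v] .
  moreover have "0 < vt / t" "0 \<le> - ln vt / (1 - vt)"
    using v s st ln_less_zero[of vt] by (auto simp: divide_nonpos_pos)
  ultimately have "vt / t + (vt / t)\<^sup>2 * (- ln vt / (1 - vt)) < vs / s + (vs / s)\<^sup>2 * (- ln vs / (1 - vs))"
    by (intro add_sq_mult_strict_mono) auto
  then show "Hdot t / Idot t < Hdot s / Idot s"
    using Hdot_div_Idot_eq[of s] Hdot_div_Idot_eq[of t] s st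
    unfolding vs_def vt_def by (simp add: divide_strict_right_mono)
qed

end
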